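(* Let $R$ be a commutative Noetherian ring, $I\subseteq R$ an ideal, and $(F_\bullet,d_\bullet)$ a free resolution of $R/I$ with $F_0=R$. Assume that for each $i\ge0$ there is an $R$-bilinear product $\cdot:F_1\otimes_R F_i\to F_{i+1}$ satisfying, for all $f_1\in F_1$, $f_i\in F_i$: (a) $d_{i+1}(f_1\cdot f_i)=d_1(f_1)f_i-f_1\cdot d_i(f_i)$, and (b) $f_1\cdot(f_1\cdot f_i)=0$. Then for any ideal $\mathfrak{a}\subseteq I$ generated by a regular sequence, $F_\bullet$ is a DG-module over the Koszul complex $K_\bullet$ resolving $R/\mathfrak{a}$.
   Context: A DG $K_\bullet$-module structure on $F_\bullet$ is a unital, associative action $K_p\otimes_R F_q\to F_{p+q}$ of the Koszul complex (viewed as the exterior algebra DG-algebra) satisfying $d(x\cdot f)=d(x)\cdot f+(-1)^{|x|}x\cdot d(f)$. *)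

theory Defs
  imports Main
begin

definition is_ideal :: "'a::comm_ring_1 set \<Rightarrow> bool" where
  "is_ideal J \<longleftrightarrow> 0 \<in> J \<and> (\<forall>x\<in>J. \<forall>y\<in>J. x + y \<in> J) \<and> (\<forall>r. \<forall>x\<in>J. r * x \<in> J)"

definition ideal_gen :: "(nat \<Rightarrow> 'a::comm_ring_1) \<Rightarrow> nat \<Rightarrow> 'a set" where
  "ideal_gen a k = {\<Sum>j<k. r j * a j | r. True}"

definition noetherian_ring :: "'a::comm_ring_1 itself \<Rightarrow> bool" where
  "noetherian_ring TYPE('a) \<longleftrightarrow>
     (\<forall>J::'a set. is_ideal J \<longrightarrow> (\<exists>a k. J = ideal_gen a k))"

definition regular_sequence :: "(nat \<Rightarrow> 'a::comm_ring_1) \<Rightarrow> nat \<Rightarrow> bool" where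
  "regular_sequence a n \<longleftrightarrow>
     (\<forall>k<n. \<forall>r. r * a k \<in> ideal_gen a k \<longrightarrow> r \<in> ideal_gen a k) \<and>
     ideal_gen a n \<noteq> UNIV"

definition free_mod :: "'i set \<Rightarrow> ('i \<Rightarrow> 'a::comm_ring_1) set" where
  "free_mod B = {f. (\<forall>x. x \<notin> B \<longrightarrow> f x = 0) \<and> finite {x. f x \<noteq> 0}}"

definition vadd :: "('i \<Rightarrow> 'a::comm_ring_1) \<Rightarrow> ('i \<Rightarrow> 'a) \<Rightarrow> 'i \<Rightarrow> 'a" where
  "vadd f g = (\<lambda>x. f x + g x)"

definition vscale :: "'a::comm_ring_1 \<Rightarrow> ('i \<Rightarrow> 'a) \<Rightarrow> 'i \<Rightarrow> 'a" where
  "vscale r f = (\<lambda>x. r * f x)"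

definition vzero :: "'i \<Rightarrow> 'a::comm_ring_1" where
  "vzero = (\<lambda>x. 0)"

definition lin_on :: "('i \<Rightarrow> 'a::comm_ring_1) set \<Rightarrow> (('i \<Rightarrow> 'a) \<Rightarrow> ('j \<Rightarrow> 'a)) \<Rightarrow> bool" where
  "lin_on A h \<longleftrightarrow> (\<forall>u\<in>A. \<forall>v\<in>A. h (vadd u v) = vadd (h u) (h v)) \<and>
                   (\<forall>r. \<forall>u\<in>A. h (vscale r u) = vscale r (h u))"

definition bilin_on :: "('i \<Rightarrow> 'a::comm_ring_1) set \<Rightarrow> ('j \<Rightarrow> 'a) set \<Rightarrow>
     (('i \<Rightarrow> 'a) \<Rightarrow> ('j \<Rightarrow> 'a) \<Rightarrow> ('k \<Rightarrow> 'a)) \<Rightarrow> bool" where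
  "bilin_on A C h \<longleftrightarrow> (\<forall>u\<in>A. lin_on C (h u)) \<and> (\<forall>v\<in>C. lin_on A (\<lambda>u. h u v))"

text \<open>F_i = free module on basis B i; F_0 = R is free on the single basis element i0.
  d i : F_i \<rightarrow> F_(i-1) for i \<ge> 1, d 0 = 0 (F_(-1) = 0).  The complex is exact in
  degrees \<ge> 1 and H_0 = F_0 / im d_1 = R/I, i.e. im d_1 = I e_(i0).\<close>
definition free_resolution ::
  "'a::comm_ring_1 set \<Rightarrow> (nat \<Rightarrow> 'i set) \<Rightarrow> 'i \<Rightarrow> (nat \<Rightarrow> ('i \<Rightarrow> 'a) \<Rightarrow> ('i \<Rightarrow> 'a)) \<Rightarrow> bool" where
  "free_resolution I B i0 d \<longleftrightarrow>
     B 0 = {i0} \<and>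
     (\<forall>i. lin_on (free_mod (B i)) (d i)) \<and>
     (\<forall>f\<in>free_mod (B 0). d 0 f = vzero) \<and>
     (\<forall>i. \<forall>f\<in>free_mod (B (Suc i)). d (Suc i) f \<in> free_mod (B i)) \<and>
     (\<forall>i. \<forall>f\<in>free_mod (B (Suc i)). d i (d (Suc i) f) = vzero) \<and>
     (\<forall>i\<ge>1. {f \<in> free_mod (B i). d i f = vzero} = d (Suc i) ` free_mod (B (Suc i))) \<and>
     d 1 ` free_mod (B 1) = {f \<in> free_mod (B 0). f i0 \<in> I}"

text \<open>Elements: coefficient functions on subsets S of {..<n}, standing for e_S.\<close>
definition koszul :: "nat \<Rightarrow> nat \<Rightarrow> (nat set \<Rightarrow> 'a::comm_ring_1) set" where
  "koszul n p = {x. \<forall>S. \<not> (S \<subseteq> {..<n} \<and> card S = p) \<longrightarrow> x S = 0}"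

text \<open>Sign of e_S \<and> e_T = sgn(S,T) e_(S \<union> T) for disjoint S, T.\<close>
definition ksign :: "nat set \<Rightarrow> nat set \<Rightarrow> 'a::comm_ring_1" where
  "ksign S T = (-1) ^ card {(s, t). s \<in> S \<and> t \<in> T \<and> t < s}"

definition kmult :: "(nat set \<Rightarrow> 'a::comm_ring_1) \<Rightarrow> (nat set \<Rightarrow> 'a) \<Rightarrow> nat set \<Rightarrow> 'a" where
  "kmult x y = (\<lambda>U. \<Sum>S\<in>Pow U. ksign S (U - S) * x S * y (U - S))"

definition kunit :: "nat set \<Rightarrow> 'a::comm_ring_1" where
  "kunit = (\<lambda>S. if S = {} then 1 else 0)"

text \<open>d(e_S) = \<Sum>_(j\<in>S) (-1)^#{s\<in>S. s<j} a_j e_(S-{j}).\<close>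
definition kdiff :: "(nat \<Rightarrow> 'a::comm_ring_1) \<Rightarrow> nat \<Rightarrow> (nat set \<Rightarrow> 'a) \<Rightarrow> nat set \<Rightarrow> 'a" where
  "kdiff a n x = (\<lambda>T. \<Sum>j\<in>{..<n} - T. (-1) ^ card {s\<in>T. s < j} * a j * x (insert j T))"

text \<open>act p q : K_p \<times> F_q \<rightarrow> F_(p+q), bilinear, unital, associative, Leibniz rule.
  (For p = 0 the Koszul differential vanishes, and for q = 0 one has d 0 = 0, so the
  nat-subtraction indices p-1, q-1 only ever meet zero arguments.)\<close>
definition dg_koszul_module ::
  "(nat \<Rightarrow> 'a::comm_ring_1) \<Rightarrow> nat \<Rightarrow> (nat \<Rightarrow> 'i set) \<Rightarrow> (nat \<Rightarrow> ('i \<Rightarrow> 'a) \<Rightarrow> ('i \<Rightarrow> 'a))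
    \<Rightarrow> (nat \<Rightarrow> nat \<Rightarrow> (nat set \<Rightarrow> 'a) \<Rightarrow> ('i \<Rightarrow> 'a) \<Rightarrow> ('i \<Rightarrow> 'a)) \<Rightarrow> bool" where
  "dg_koszul_module a n B d act \<longleftrightarrow>
     (\<forall>p q. bilin_on (koszul n p) (free_mod (B q)) (act p q)) \<and>
     (\<forall>p q. \<forall>x\<in>koszul n p. \<forall>f\<in>free_mod (B q). act p q x f \<in> free_mod (B (p + q))) \<and>
     (\<forall>q. \<forall>f\<in>free_mod (B q). act 0 q kunit f = f) \<and>
     (\<forall>p p' q. \<forall>x\<in>koszul n p. \<forall>y\<in>koszul n p'. \<forall>f\<in>free_mod (B q).
        act (p + p') q (kmult x y) f = act p (p' + q) x (act p' q y f)) \<and>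
     (\<forall>p q. \<forall>x\<in>koszul n p. \<forall>f\<in>free_mod (B q).
        d (p + q) (act p q x f) =
          vadd (act (p - 1) q (kdiff a n x) f) (vscale ((-1) ^ p) (act p (q - 1) x (d q f))))"

end

theory Submission
  imports Defs
begin

text \<open>Each \<open>a\<^sub>j\<close> lies in \<open>I = d\<^sub>1(F\<^sub>1)\<close>, so it lifts to some \<open>u\<^sub>j \<in> F\<^sub>1\<close>; let \<open>e\<^sub>j\<close> act on
  \<open>F\<close> as multiplication by \<open>u\<^sub>j\<close>. Polarising condition (b) shows that these operators
  anticommute and square to zero, so \<open>e\<^sub>S = e\<^sub>s\<^sub>1 \<cdots> e\<^sub>s\<^sub>k\<close> for \<open>s\<^sub>1 < \<dots> < s\<^sub>k\<close> defines an
  action of the exterior algebra. Condition (a) is the Leibniz rule for a single \<open>e\<^sub>j\<close>, and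
  induction on \<open>|S|\<close> extends it to every \<open>e\<^sub>S\<close>.\<close>

lemma free_mod_vzero: "vzero \<in> free_mod A"
  by (simp add: free_mod_def vzero_def)

lemma free_mod_sum:
  assumes K: "finite K" and g: "\<And>k. k \<in> K \<Longrightarrow> c k \<noteq> 0 \<Longrightarrow> g k \<in> free_mod A"
  shows "(\<lambda>i. \<Sum>k\<in>K. c k * g k i) \<in> free_mod A"
proof -
  let ?K = "{k \<in> K. c k \<noteq> 0}"
  have "{i. (\<Sum>k\<in>K. c k * g k i) \<noteq> 0} \<subseteq> (\<Union>k\<in>?K. {i. g k i \<noteq> 0})"
  proof
    fix i assume "i \<in> {i. (\<Sum>k\<in>K. c k * g k i) \<noteq> 0}"
    then obtain k where "k \<in> K" "c k * g k i \<noteq> 0"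
      by (auto elim: sum.not_neutral_contains_not_neutral)
    then show "i \<in> (\<Union>k\<in>?K. {i. g k i \<noteq> 0})" by auto
  qed
  moreover have "finite (\<Union>k\<in>?K. {i. g k i \<noteq> 0})"
    using K g by (auto simp: free_mod_def)
  moreover have "(\<Sum>k\<in>K. c k * g k i) = 0" if "i \<notin> A" for i
  proof (rule sum.neutral, intro ballI)
    show "c k * g k i = 0" if "k \<in> K" for k
      using g[OF that] \<open>i \<notin> A\<close> by (cases "c k = 0") (auto simp: free_mod_def)
  qed
  ultimately show ?thesis
    by (auto simp: free_mod_def intro: finite_subset)
qed

lemma free_mod_vadd: "u \<in> free_mod A \<Longrightarrow> v \<in> free_mod A \<Longrightarrow> vadd u v \<in> free_mod A"
proof -
  assume "u \<in> free_mod A" "v \<in> free_mod A"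
  moreover have "{x. u x + v x \<noteq> 0} \<subseteq> {x. u x \<noteq> 0} \<union> {x. v x \<noteq> 0}" by auto
  ultimately show ?thesis
    unfolding free_mod_def vadd_def by (auto intro: finite_subset)
qed

lemma free_mod_vscale: "u \<in> free_mod A \<Longrightarrow> vscale r u \<in> free_mod A"
proof -
  assume "u \<in> free_mod A"
  moreover have "{x. r * u x \<noteq> 0} \<subseteq> {x. u x \<noteq> 0}" by auto
  ultimately show ?thesis
    unfolding free_mod_def vscale_def by (auto intro: finite_subset)
qed

lemma lin_on_vzero:
  assumes "lin_on (free_mod A) h"
  shows "h vzero = vzero"
proof -
  have "h (vscale 0 vzero) = vscale 0 (h vzero)"
    using assms free_mod_vzero unfolding lin_on_def by blast
  then show ?thesis by (simp add: vscale_def vzero_def)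
qed

lemma lin_on_sum:
  assumes h: "lin_on (free_mod A) h" and K: "finite K"
    and g: "\<And>k. k \<in> K \<Longrightarrow> c k \<noteq> 0 \<Longrightarrow> g k \<in> free_mod A"
  shows "h (\<lambda>i. \<Sum>k\<in>K. c k * g k i) = (\<lambda>i. \<Sum>k\<in>K. c k * h (g k) i)"
  using K g
proof (induction K rule: finite_induct)
  case empty
  then show ?case using lin_on_vzero[OF h] by (simp add: vzero_def)
next
  case (insert k K)
  let ?rest = "\<lambda>i. \<Sum>l\<in>K. c l * g l i"
  show ?case
  proof (cases "c k = 0")
    case True
    then show ?thesis using insert by simp
  next
    case False
    have "?rest \<in> free_mod A" using insert by (intro free_mod_sum) auto
    moreover have "g k \<in> free_mod A" using insert False by simp
    ultimately have "h (vadd (vscale (c k) (g k)) ?rest) = vadd (vscale (c k) (h (g k))) (h ?rest)"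
      using h by (simp add: lin_on_def free_mod_vscale)
    then show ?thesis using insert by (simp add: vadd_def vscale_def)
  qed
qed

lemma lin_on_comp: "lin_on A g \<Longrightarrow> g ` A \<subseteq> C \<Longrightarrow> lin_on C h \<Longrightarrow> lin_on A (h \<circ> g)"
  unfolding lin_on_def by (simp add: image_subset_iff)

lemma sum_Pow_insert_reindex:
  assumes "finite A"
  shows "(\<Sum>S\<in>Pow A. \<Sum>j\<in>S. h S j) = (\<Sum>T\<in>Pow A. \<Sum>j\<in>A - T. h (insert j T) j)"
proof -
  have "(\<Sum>S\<in>Pow A. \<Sum>j\<in>S. h S j) = (\<Sum>(S, j)\<in>Sigma (Pow A) (\<lambda>S. S). h S j)"
    using assms by (subst sum.Sigma) (auto intro: finite_subset)
  also have "\<dots> = (\<Sum>(T, j)\<in>Sigma (Pow A) (\<lambda>T. A - T). h (insert j T) j)"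
    by (rule sum.reindex_bij_witness[of _ "\<lambda>(T, j). (insert j T, j)" "\<lambda>(S, j). (S - {j}, j)"])
      (auto simp: insert_absorb)
  also have "\<dots> = (\<Sum>T\<in>Pow A. \<Sum>j\<in>A - T. h (insert j T) j)"
    using assms by (subst sum.Sigma) auto
  finally show ?thesis .
qed

lemma sum_Pow_disjoint_reindex:
  assumes "finite A"
  shows "(\<Sum>U\<in>Pow A. \<Sum>S\<in>Pow U. g S (U - S)) =
         (\<Sum>S\<in>Pow A. \<Sum>T\<in>Pow A. if S \<inter> T = {} then g S T else 0)"
proof -
  have "(\<Sum>U\<in>Pow A. \<Sum>S\<in>Pow U. g S (U - S)) = (\<Sum>(U, S)\<in>Sigma (Pow A) Pow. g S (U - S))"
    using assms by (subst sum.Sigma) (auto intro: finite_subset)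
  also have "\<dots> = (\<Sum>w\<in>{w \<in> Pow A \<times> Pow A. fst w \<inter> snd w = {}}. case_prod g w)"
    by (rule sum.reindex_bij_witness[of _ "\<lambda>(S, T). (S \<union> T, S)" "\<lambda>(U, S). (S, U - S)"])
      auto
  also have "\<dots> = (\<Sum>(S, T)\<in>Pow A \<times> Pow A. if S \<inter> T = {} then g S T else 0)"
    using assms by (simp add: sum.inter_filter case_prod_unfold)
  also have "\<dots> = (\<Sum>S\<in>Pow A. \<Sum>T\<in>Pow A. if S \<inter> T = {} then g S T else 0)"
    by (rule sum.cartesian_product[symmetric])
  finally show ?thesis .
qed

lemma add_card_Diff_singleton: "j \<in> S \<Longrightarrow> finite S \<Longrightarrow> q + card (S - {j}) = q + card S - 1"
  by (cases "card S") (auto simp: card_gt_0_iff)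

lemma ideal_gen_generator:
  assumes "j < k"
  shows "a j \<in> ideal_gen a k"
proof -
  have "(\<Sum>i<k. (if i = j then 1 else 0) * a i) = (\<Sum>i<k. if i = j then a i else 0)"
    by (rule sum.cong) auto
  then have "a j = (\<Sum>i<k. (if i = j then 1 else 0) * a i)" using assms by simp
  then show ?thesis unfolding ideal_gen_def by auto
qed

lemma free_resolution_lift:
  assumes res: "free_resolution I B i0 d" and c: "c \<in> I"
  shows "\<exists>u \<in> free_mod (B 1). d 1 u i0 = c"
proof -
  have B0: "B 0 = {i0}" using res unfolding free_resolution_def by (elim conjE)
  have im: "d 1 ` free_mod (B 1) = {f \<in> free_mod (B 0). f i0 \<in> I}"
    using res unfolding free_resolution_def by (elim conjE)
  let ?e = "\<lambda>i. if i = i0 then c else 0"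
  have "{i. ?e i \<noteq> 0} \<subseteq> {i0}" by auto
  then have "finite {i. ?e i \<noteq> 0}" using finite_subset by blast
  then have "?e \<in> free_mod (B 0)" using B0 by (simp add: free_mod_def)
  then have "?e \<in> d 1 ` free_mod (B 1)" unfolding im using c by simp
  then obtain u where eq: "?e = d 1 u" and u: "u \<in> free_mod (B 1)" by (rule imageE)
  have "d 1 u i0 = c" using eq[symmetric] by simp
  then show ?thesis using u by blast
qed

lemma free_resolution_lifts:
  assumes res: "free_resolution I B i0 d" and sub: "ideal_gen a n \<subseteq> I"
  obtains lift where "\<And>j. lift j \<in> free_mod (B 1)" and "\<And>j. j < n \<Longrightarrow> d 1 (lift j) i0 = a j"
proof -
  have "\<forall>j. \<exists>u. u \<in> free_mod (B 1) \<and> (j < n \<longrightarrow> d 1 u i0 = a j)"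
  proof
    fix j
    show "\<exists>u. u \<in> free_mod (B 1) \<and> (j < n \<longrightarrow> d 1 u i0 = a j)"
    proof (cases "j < n")
      case True
      then have "a j \<in> I" using sub ideal_gen_generator by blast
      then show ?thesis using free_resolution_lift[OF res] by blast
    qed (use free_mod_vzero in blast)
  qed
  then obtain lift where "\<forall>j. lift j \<in> free_mod (B 1) \<and> (j < n \<longrightarrow> d 1 (lift j) i0 = a j)"
    by (rule choice[THEN exE])
  then show ?thesis using that by blast
qed

lemma koszul_card: "x \<in> koszul n p \<Longrightarrow> x S \<noteq> 0 \<Longrightarrow> S \<subseteq> {..<n} \<Longrightarrow> card S = p"
  by (auto simp: koszul_def)

lemma sum_sign_insert_min:
  fixes c :: "nat \<Rightarrow> 'a::comm_ring_1"
  assumes S: "finite S" and m: "\<forall>s\<in>S. m < s"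
  shows "(\<Sum>j\<in>insert m S. (-1) ^ card {s \<in> insert m S. s < j} * c j) =
    c m - (\<Sum>j\<in>S. (-1) ^ card {s \<in> S. s < j} * c j)"
proof -
  have mS: "m \<notin> S" using m by auto
  have no_smaller: "{s \<in> insert m S. s < m} = {}" using m by auto
  have sign: "(-1) ^ card {s \<in> insert m S. s < j} = - ((-1) ^ card {s \<in> S. s < j} :: 'a)" if "j \<in> S" for j
  proof -
    have "{s \<in> insert m S. s < j} = insert m {s \<in> S. s < j}" using m that by auto
    then show ?thesis using S mS by simp
  qed
  have "(\<Sum>j\<in>S. (-1) ^ card {s \<in> insert m S. s < j} * c j) = - (\<Sum>j\<in>S. (-1) ^ card {s \<in> S. s < j} * c j)"
    by (subst sum_negf[symmetric], rule sum.cong[OF refl]) (simp only: sign mult_minus_left)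
  then show ?thesis unfolding sum.insert[OF S mS] no_smaller by simp
qed

lemma ksign_insert:
  assumes S: "finite S" and T: "finite T" and m: "m \<notin> S"
  shows "ksign (insert m S) T = ksign S T * (-1) ^ card {t \<in> T. t < m}"
proof -
  let ?P = "{(s, t). s \<in> S \<and> t \<in> T \<and> t < s}"
  let ?Q = "Pair m ` {t \<in> T. t < m}"
  have split: "{(s, t). s \<in> insert m S \<and> t \<in> T \<and> t < s} = ?P \<union> ?Q" by auto
  have "finite ?P" using S T by (auto intro: finite_subset[of _ "S \<times> T"])
  moreover have "?P \<inter> ?Q = {}" using m by auto
  ultimately have "card (?P \<union> ?Q) = card ?P + card {t \<in> T. t < m}"
    using T by (simp add: card_Un_disjoint card_image inj_on_def)
  then show ?thesis unfolding ksign_def split by (simp add: power_add)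
qed

locale F1_product =
  fixes B :: "nat \<Rightarrow> 'i set" and i0 :: 'i
    and d :: "nat \<Rightarrow> ('i \<Rightarrow> 'a::comm_ring_1) \<Rightarrow> ('i \<Rightarrow> 'a)"
    and prod :: "nat \<Rightarrow> ('i \<Rightarrow> 'a) \<Rightarrow> ('i \<Rightarrow> 'a) \<Rightarrow> ('i \<Rightarrow> 'a)"
  assumes d_lin: "lin_on (free_mod (B i)) (d i)"
    and d_0: "f \<in> free_mod (B 0) \<Longrightarrow> d 0 f = vzero"
    and d_mem: "f \<in> free_mod (B (Suc i)) \<Longrightarrow> d (Suc i) f \<in> free_mod (B i)"
    and prod_bilin: "bilin_on (free_mod (B 1)) (free_mod (B i)) (prod i)"
    and prod_mem: "u \<in> free_mod (B 1) \<Longrightarrow> f \<in> free_mod (B i) \<Longrightarrow> prod i u f \<in> free_mod (B (Suc i))"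
    and d_prod_0: "u \<in> free_mod (B 1) \<Longrightarrow> f \<in> free_mod (B 0) \<Longrightarrow>
      d 1 (prod 0 u f) = vscale (d 1 u i0) f"
    and d_prod_Suc: "u \<in> free_mod (B 1) \<Longrightarrow> f \<in> free_mod (B (Suc i)) \<Longrightarrow>
      d (Suc (Suc i)) (prod (Suc i) u f) = vadd (vscale (d 1 u i0) f) (vscale (-1) (prod i u (d (Suc i) f)))"
    and prod_square_zero: "u \<in> free_mod (B 1) \<Longrightarrow> f \<in> free_mod (B i) \<Longrightarrow>
      prod (Suc i) u (prod i u f) = vzero"
begin

lemma d_mem_pred: "f \<in> free_mod (B q) \<Longrightarrow> d q f \<in> free_mod (B (q - 1))"
  by (cases q) (simp_all add: d_0 d_mem free_mod_vzero)

lemma prod_lin_right: "u \<in> free_mod (B 1) \<Longrightarrow> lin_on (free_mod (B i)) (prod i u)"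
  using prod_bilin unfolding bilin_on_def by blast

lemma prod_lin_left: "f \<in> free_mod (B i) \<Longrightarrow> lin_on (free_mod (B 1)) (\<lambda>u. prod i u f)"
  using prod_bilin unfolding bilin_on_def by blast

lemma prod_vzero: "u \<in> free_mod (B 1) \<Longrightarrow> prod i u vzero = vzero"
  by (rule lin_on_vzero[OF prod_lin_right])

lemma prod_vscale: "u \<in> free_mod (B 1) \<Longrightarrow> f \<in> free_mod (B i) \<Longrightarrow>
    prod i u (vscale r f) = vscale r (prod i u f)"
  using prod_lin_right unfolding lin_on_def by blast

lemma d_prod:
  assumes u: "u \<in> free_mod (B 1)" and f: "f \<in> free_mod (B k)"
  shows "d (Suc k) (prod k u f) = vadd (vscale (d 1 u i0) f) (vscale (-1) (prod (k - 1) u (d k f)))"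
proof (cases k)
  case 0
  have "prod (k - 1) u (d k f) = vzero" using 0 f by (simp add: d_0 prod_vzero[OF u])
  then show ?thesis
    using d_prod_0[OF u] f 0 by (simp add: vadd_def vscale_def vzero_def)
next
  case (Suc i)
  then show ?thesis using assms by (simp add: d_prod_Suc)
qed

text \<open>Polarisation of the square-zero condition.\<close>
lemma prod_anticomm:
  assumes u: "u \<in> free_mod (B 1)" and v: "v \<in> free_mod (B 1)" and f: "f \<in> free_mod (B k)"
  shows "prod (Suc k) u (prod k v f) = vscale (-1) (prod (Suc k) v (prod k u f))"
proof -
  have uv: "vadd u v \<in> free_mod (B 1)" using u v by (rule free_mod_vadd)
  have uf: "prod k u f \<in> free_mod (B (Suc k))" and vf: "prod k v f \<in> free_mod (B (Suc k))"
    using u v f by (simp_all add: prod_mem)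
  have "vzero = prod (Suc k) (vadd u v) (prod k (vadd u v) f)"
    using prod_square_zero[OF uv f] by simp
  also have "\<dots> = vadd (vadd (prod (Suc k) u (prod k u f)) (prod (Suc k) v (prod k u f)))
                       (vadd (prod (Suc k) u (prod k v f)) (prod (Suc k) v (prod k v f)))"
    using prod_lin_left[OF f] prod_lin_right[OF uv] prod_lin_left[OF uf] prod_lin_left[OF vf]
      u v uf vf unfolding lin_on_def by simp
  also have "\<dots> = vadd (prod (Suc k) v (prod k u f)) (prod (Suc k) u (prod k v f))"
    using prod_square_zero u v f by (simp add: vadd_def vzero_def)
  finally show ?thesis
    by (simp add: fun_eq_iff vadd_def vscale_def vzero_def eq_neg_iff_add_eq_0 add.commute)
qed

end

locale koszul_lift = F1_product +
  fixes a :: "nat \<Rightarrow> 'a::comm_ring_1" and n :: nat and lift :: "nat \<Rightarrow> 'i \<Rightarrow> 'a"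
  assumes lift_mem: "lift j \<in> free_mod (B 1)"
    and d_lift: "j < n \<Longrightarrow> d 1 (lift j) i0 = a j"
begin

fun list_act :: "nat list \<Rightarrow> nat \<Rightarrow> ('i \<Rightarrow> 'a) \<Rightarrow> ('i \<Rightarrow> 'a)" where
  "list_act [] q f = f"
| "list_act (j # js) q f = prod (q + length js) (lift j) (list_act js q f)"

definition basis_act :: "nat set \<Rightarrow> nat \<Rightarrow> ('i \<Rightarrow> 'a) \<Rightarrow> ('i \<Rightarrow> 'a)" where
  "basis_act S q = list_act (sorted_list_of_set S) q"

lemma list_act_mem: "f \<in> free_mod (B q) \<Longrightarrow> list_act js q f \<in> free_mod (B (q + length js))"
  by (induction js) (auto intro: prod_mem lift_mem)

lemma list_act_lin: "lin_on (free_mod (B q)) (list_act js q)"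
proof (induction js)
  case Nil
  then show ?case by (simp add: lin_on_def)
next
  case (Cons j js)
  have "list_act js q ` free_mod (B q) \<subseteq> free_mod (B (q + length js))"
    using list_act_mem by blast
  then have "lin_on (free_mod (B q)) (prod (q + length js) (lift j) \<circ> list_act js q)"
    by (rule lin_on_comp[OF Cons _ prod_lin_right[OF lift_mem]])
  then show ?case by (simp add: comp_def)
qed

lemma basis_act_mem: "f \<in> free_mod (B q) \<Longrightarrow> finite S \<Longrightarrow> basis_act S q f \<in> free_mod (B (q + card S))"
  using list_act_mem[of f q "sorted_list_of_set S"] by (simp add: basis_act_def)

lemma basis_act_lin: "lin_on (free_mod (B q)) (basis_act S q)"
  by (simp add: basis_act_def list_act_lin)

lemma basis_act_vzero: "basis_act S q vzero = vzero"
  by (rule lin_on_vzero[OF basis_act_lin])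

lemma basis_act_empty [simp]: "basis_act {} q f = f"
  by (simp add: basis_act_def)

lemma basis_act_insert_min:
  assumes S: "finite S" and m: "\<forall>s\<in>S. m < s"
  shows "basis_act (insert m S) q f = prod (q + card S) (lift m) (basis_act S q f)"
proof -
  have "Min (insert m S) = m" using S m by (auto intro: Min_eqI simp: less_imp_le)
  moreover have "insert m S - {m} = S" using m by auto
  ultimately have "sorted_list_of_set (insert m S) = m # sorted_list_of_set S"
    using sorted_list_of_set_nonempty[of "insert m S"] S by simp
  then show ?thesis using S by (simp add: basis_act_def)
qed

lemma prod_lift_basis_act_in:
  assumes f: "f \<in> free_mod (B q)" and T: "finite T" and j: "j \<in> T"
  shows "prod (q + card T) (lift j) (basis_act T q f) = vzero"
  using T j
proof (induction T rule: finite_linorder_min_induct)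
  case empty
  then show ?case by simp
next
  case (insert m T)
  let ?k = "q + card T"
  let ?X = "basis_act T q f"
  have X: "?X \<in> free_mod (B ?k)" using basis_act_mem[OF f insert.hyps(1)] .
  have step: "prod (q + card (insert m T)) (lift j) (basis_act (insert m T) q f) =
      prod (Suc ?k) (lift j) (prod ?k (lift m) ?X)"
    using basis_act_insert_min[OF insert.hyps(1,2)] insert.hyps by auto
  show ?case
  proof (cases "j = m")
    case True
    then show ?thesis unfolding step using prod_square_zero[OF lift_mem X] by simp
  next
    case False
    then have "j \<in> T" using insert.prems by simp
    then show ?thesis
      unfolding step prod_anticomm[OF lift_mem lift_mem X] insert.IH[OF \<open>j \<in> T\<close>] prod_vzero[OF lift_mem]
      by (simp add: vscale_def vzero_def)
  qed
qed

lemma prod_lift_basis_act_notin: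
  assumes f: "f \<in> free_mod (B q)" and T: "finite T" and j: "j \<notin> T"
  shows "prod (q + card T) (lift j) (basis_act T q f) =
    vscale ((-1) ^ card {t \<in> T. t < j}) (basis_act (insert j T) q f)"
  using T j
proof (induction T rule: finite_linorder_min_induct)
  case empty
  then show ?case using basis_act_insert_min[of "{}" j q f] by (simp add: vscale_def)
next
  case (insert m T)
  let ?k = "q + card T"
  let ?X = "basis_act T q f"
  have X: "?X \<in> free_mod (B ?k)" using basis_act_mem[OF f insert.hyps(1)] .
  have step: "prod (q + card (insert m T)) (lift j) (basis_act (insert m T) q f) =
      prod (Suc ?k) (lift j) (prod ?k (lift m) ?X)"
    using basis_act_insert_min[OF insert.hyps(1,2)] insert.hyps by auto
  have "j \<noteq> m" using insert.prems by simp
  then consider "j < m" | "m < j" by linarith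
  then show ?case
  proof cases
    case 1
    then have "\<forall>t\<in>insert m T. j < t" using insert.hyps(2) by auto
    then have "basis_act (insert j (insert m T)) q f =
        prod (q + card (insert m T)) (lift j) (basis_act (insert m T) q f)"
      using basis_act_insert_min insert.hyps(1) by blast
    moreover have count: "{t \<in> insert m T. t < j} = {}" using 1 insert.hyps(2) by auto
    ultimately show ?thesis unfolding count by (simp add: vscale_def)
  next
    case 2
    have jT: "j \<notin> T" using insert.prems by simp
    then have mem: "basis_act (insert j T) q f \<in> free_mod (B (Suc ?k))"
      using basis_act_mem[OF f, of "insert j T"] insert.hyps(1) by simp
    have "basis_act (insert m (insert j T)) q f = prod (Suc ?k) (lift m) (basis_act (insert j T) q f)"
      using basis_act_insert_min[of "insert j T" m] insert.hyps 2 jT by simp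
    moreover have "{t \<in> insert m T. t < j} = insert m {t \<in> T. t < j}" using 2 by auto
    then have "card {t \<in> insert m T. t < j} = Suc (card {t \<in> T. t < j})"
      using insert.hyps by auto
    ultimately show ?thesis
      unfolding step prod_anticomm[OF lift_mem lift_mem X] insert.IH[OF jT] prod_vscale[OF lift_mem mem]
      by (simp add: vscale_def insert_commute)
  qed
qed

lemma basis_act_basis_act:
  assumes f: "f \<in> free_mod (B q)" and T: "finite T" and S: "finite S"
  shows "basis_act S (q + card T) (basis_act T q f) =
    (if S \<inter> T = {} then vscale (ksign S T) (basis_act (S \<union> T) q f) else vzero)"
  using S
proof (induction S rule: finite_linorder_min_induct)
  case empty
  then show ?case by (simp add: ksign_def vscale_def)
next
  case (insert m S)
  have mS: "m \<notin> S" using insert.hyps(2) by auto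
  have step: "basis_act (insert m S) (q + card T) (basis_act T q f) =
      prod (q + card T + card S) (lift m) (basis_act S (q + card T) (basis_act T q f))"
    using basis_act_insert_min insert.hyps by blast
  show ?case
  proof (cases "S \<inter> T = {}")
    case False
    then show ?thesis unfolding step insert.IH by (auto simp: prod_vzero[OF lift_mem])
  next
    case True
    let ?U = "S \<union> T"
    have U: "finite ?U" using insert.hyps(1) T by simp
    have card_U: "q + card T + card S = q + card ?U"
      using card_Un_disjoint[OF insert.hyps(1) T True] by simp
    have scaled: "basis_act (insert m S) (q + card T) (basis_act T q f) =
        vscale (ksign S T) (prod (q + card ?U) (lift m) (basis_act ?U q f))"
      unfolding step insert.IH card_U using True prod_vscale[OF lift_mem basis_act_mem[OF f U]]
      by simp
    show ?thesis
    proof (cases "m \<in> T")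
      case True
      then have "m \<in> ?U" by simp
      with True show ?thesis
        unfolding scaled prod_lift_basis_act_in[OF f U \<open>m \<in> ?U\<close>] by (simp add: vscale_def vzero_def)
    next
      case False
      have "m \<notin> ?U" using False mS by simp
      moreover have "{t \<in> ?U. t < m} = {t \<in> T. t < m}" using insert.hyps(2) by auto
      ultimately show ?thesis
        unfolding scaled prod_lift_basis_act_notin[OF f U \<open>m \<notin> ?U\<close>] ksign_insert[OF insert.hyps(1) T mS]
        using False True by (simp add: vscale_def mult.assoc)
    qed
  qed
qed

lemma prod_lift_boundary:
  assumes f: "f \<in> free_mod (B q)" and S: "finite S" and m: "\<forall>s\<in>S. m < s"
  shows "prod (q + card S - 1) (lift m) (\<lambda>i. \<Sum>j\<in>S. c j * basis_act (S - {j}) q f i) =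
    (\<lambda>i. \<Sum>j\<in>S. c j * basis_act (insert m S - {j}) q f i)"
proof -
  have card: "q + card (S - {j}) = q + card S - 1" if "j \<in> S" for j
    using that S by (rule add_card_Diff_singleton)
  have "basis_act (S - {j}) q f \<in> free_mod (B (q + card S - 1))" if "j \<in> S" for j
    using basis_act_mem[OF f, of "S - {j}"] S card[OF that] by simp
  then have "prod (q + card S - 1) (lift m) (\<lambda>i. \<Sum>j\<in>S. c j * basis_act (S - {j}) q f i) =
      (\<lambda>i. \<Sum>j\<in>S. c j * prod (q + card S - 1) (lift m) (basis_act (S - {j}) q f) i)"
    by (intro lin_on_sum[OF prod_lin_right[OF lift_mem] S])
  also have "\<dots> = (\<lambda>i. \<Sum>j\<in>S. c j * basis_act (insert m S - {j}) q f i)"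
  proof -
    have "prod (q + card S - 1) (lift m) (basis_act (S - {j}) q f) = basis_act (insert m S - {j}) q f"
      if "j \<in> S" for j
    proof -
      have "insert m S - {j} = insert m (S - {j})" using m that by auto
      then show ?thesis using basis_act_insert_min[of "S - {j}" m q f] S m card[OF that] by simp
    qed
    then show ?thesis by simp
  qed
  finally show ?thesis .
qed

lemma basis_act_d_mem:
  assumes f: "f \<in> free_mod (B q)" and S: "finite S"
  shows "basis_act S (q - 1) (d q f) \<in> free_mod (B (q + card S - 1))"
proof (cases q)
  case 0
  then show ?thesis using f by (simp add: d_0 basis_act_vzero free_mod_vzero)
next
  case (Suc p)
  then show ?thesis using basis_act_mem[OF d_mem_pred[OF f] S] by simp
qed

lemma prod_lift_basis_act_d:
  assumes f: "f \<in> free_mod (B q)" and S: "finite S" and m: "\<forall>s\<in>S. m < s"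
  shows "prod (q + card S - 1) (lift m) (basis_act S (q - 1) (d q f)) = basis_act (insert m S) (q - 1) (d q f)"
proof (cases q)
  case 0
  then show ?thesis using f by (simp add: d_0 basis_act_vzero prod_vzero[OF lift_mem])
next
  case (Suc p)
  then show ?thesis using basis_act_insert_min[OF S m] by simp
qed

definition boundary_act :: "nat set \<Rightarrow> nat \<Rightarrow> ('i \<Rightarrow> 'a) \<Rightarrow> ('i \<Rightarrow> 'a)" where
  "boundary_act S q f = (\<lambda>i. \<Sum>j\<in>S. (-1) ^ card {s \<in> S. s < j} * a j * basis_act (S - {j}) q f i)"

lemma boundary_act_mem:
  assumes f: "f \<in> free_mod (B q)" and S: "finite S"
  shows "boundary_act S q f \<in> free_mod (B (q + card S - 1))"
  unfolding boundary_act_def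
proof (rule free_mod_sum[OF S])
  fix j assume "j \<in> S"
  then have "q + card (S - {j}) = q + card S - 1" using S by (rule add_card_Diff_singleton)
  then show "basis_act (S - {j}) q f \<in> free_mod (B (q + card S - 1))"
    using basis_act_mem[OF f, of "S - {j}"] S by simp
qed

lemma boundary_act_insert_min:
  assumes f: "f \<in> free_mod (B q)" and S: "finite S" and m: "\<forall>s\<in>S. m < s"
  shows "boundary_act (insert m S) q f =
    vadd (vscale (a m) (basis_act S q f)) (vscale (-1) (prod (q + card S - 1) (lift m) (boundary_act S q f)))"
proof
  fix i
  have "insert m S - {m} = S" using m by auto
  then have "boundary_act (insert m S) q f i =
      a m * basis_act S q f i - (\<Sum>j\<in>S. (-1) ^ card {s \<in> S. s < j} * a j * basis_act (insert m S - {j}) q f i)"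
    using sum_sign_insert_min[OF S m, of "\<lambda>j. a j * basis_act (insert m S - {j}) q f i"]
    by (simp add: boundary_act_def mult.assoc)
  moreover have "prod (q + card S - 1) (lift m) (boundary_act S q f) =
      (\<lambda>i. \<Sum>j\<in>S. (-1) ^ card {s \<in> S. s < j} * a j * basis_act (insert m S - {j}) q f i)"
    unfolding boundary_act_def by (rule prod_lift_boundary[OF f S m])
  ultimately show "boundary_act (insert m S) q f i =
      vadd (vscale (a m) (basis_act S q f)) (vscale (-1) (prod (q + card S - 1) (lift m) (boundary_act S q f))) i"
    by (simp add: vadd_def vscale_def)
qed

lemma d_basis_act:
  assumes f: "f \<in> free_mod (B q)" and S: "finite S" "S \<subseteq> {..<n}"
  shows "d (q + card S) (basis_act S q f) =
    vadd (boundary_act S q f) (vscale ((-1) ^ card S) (basis_act S (q - 1) (d q f)))"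
  using S
proof (induction S rule: finite_linorder_min_induct)
  case empty
  then show ?case by (simp add: boundary_act_def vadd_def vscale_def)
next
  case (insert m S)
  let ?k = "q + card S"
  let ?X = "basis_act S q f"
  let ?C = "basis_act S (q - 1) (d q f)"
  have mS: "m \<notin> S" using insert.hyps(2) by auto
  have m: "m < n" using insert.prems by simp
  have X: "?X \<in> free_mod (B ?k)" using basis_act_mem[OF f insert.hyps(1)] .
  have bd: "boundary_act S q f \<in> free_mod (B (?k - 1))" by (rule boundary_act_mem[OF f insert.hyps(1)])
  have C: "?C \<in> free_mod (B (?k - 1))" by (rule basis_act_d_mem[OF f insert.hyps(1)])
  have "d (q + card (insert m S)) (basis_act (insert m S) q f) = d (Suc ?k) (prod ?k (lift m) ?X)"
    using basis_act_insert_min insert.hyps mS by simp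
  also have "\<dots> = vadd (vscale (a m) ?X) (vscale (-1) (prod (?k - 1) (lift m) (d ?k ?X)))"
    using d_prod[OF lift_mem X] d_lift[OF m] by simp
  also have "d ?k ?X = vadd (boundary_act S q f) (vscale ((-1) ^ card S) ?C)"
    using insert.IH insert.prems by simp
  also have "prod (?k - 1) (lift m) (vadd (boundary_act S q f) (vscale ((-1) ^ card S) ?C)) =
      vadd (prod (?k - 1) (lift m) (boundary_act S q f)) (vscale ((-1) ^ card S) (prod (?k - 1) (lift m) ?C))"
    using prod_lin_right[OF lift_mem] bd C free_mod_vscale[OF C] unfolding lin_on_def by simp
  also have "prod (?k - 1) (lift m) ?C = basis_act (insert m S) (q - 1) (d q f)"
    by (rule prod_lift_basis_act_d[OF f insert.hyps(1,2)])
  finally show ?case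
    unfolding boundary_act_insert_min[OF f insert.hyps(1,2)] using insert.hyps(1) mS
    by (simp add: fun_eq_iff vadd_def vscale_def algebra_simps)
qed

text \<open>The sum runs over all subsets of \<open>{..<n}\<close>: for \<open>x \<in> K\<^sub>p\<close> only those of size \<open>p\<close>
  contribute, so one operator serves every degree \<open>p\<close>.\<close>
definition koszul_act :: "nat \<Rightarrow> (nat set \<Rightarrow> 'a) \<Rightarrow> ('i \<Rightarrow> 'a) \<Rightarrow> ('i \<Rightarrow> 'a)" where
  "koszul_act q x f = (\<lambda>i. \<Sum>S\<in>Pow {..<n}. x S * basis_act S q f i)"

lemma basis_act_mem_koszul:
  assumes "x \<in> koszul n p" "f \<in> free_mod (B q)" "S \<in> Pow {..<n}" "x S \<noteq> 0"
  shows "basis_act S q f \<in> free_mod (B (p + q))"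
  using basis_act_mem[of f q S] koszul_card[of x n p S] assms
  by (simp add: finite_subset add.commute)

lemma koszul_act_mem: "x \<in> koszul n p \<Longrightarrow> f \<in> free_mod (B q) \<Longrightarrow> koszul_act q x f \<in> free_mod (B (p + q))"
  unfolding koszul_act_def by (intro free_mod_sum basis_act_mem_koszul) simp_all

lemma koszul_act_lin: "lin_on (free_mod (B q)) (koszul_act q x)"
  using basis_act_lin unfolding lin_on_def
  by (simp add: koszul_act_def vadd_def vscale_def distrib_left sum.distrib sum_distrib_left mult.left_commute)

lemma koszul_act_lin_left: "lin_on A (\<lambda>x. koszul_act q x f)"
  unfolding lin_on_def
  by (simp add: koszul_act_def vadd_def vscale_def distrib_right sum.distrib sum_distrib_left mult.assoc)

lemma koszul_act_kunit: "koszul_act q kunit f = f"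
proof -
  have "kunit S * basis_act S q f i = (if S = {} then basis_act S q f i else 0)" for S i
    by (simp add: kunit_def)
  then show ?thesis by (simp add: koszul_act_def)
qed

lemma koszul_act_kmult:
  assumes y: "y \<in> koszul n p" and f: "f \<in> free_mod (B q)"
  shows "koszul_act q (kmult x y) f = koszul_act (p + q) x (koszul_act q y f)"
proof
  fix i
  let ?g = "\<lambda>S T. ksign S T * x S * y T * basis_act (S \<union> T) q f i"
  have "koszul_act q (kmult x y) f i = (\<Sum>U\<in>Pow {..<n}. \<Sum>S\<in>Pow U. ?g S (U - S))"
    unfolding koszul_act_def kmult_def sum_distrib_right
    by (intro sum.cong refl) (auto simp: Un_absorb1)
  also have "\<dots> = (\<Sum>S\<in>Pow {..<n}. \<Sum>T\<in>Pow {..<n}. if S \<inter> T = {} then ?g S T else 0)"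
    by (rule sum_Pow_disjoint_reindex) simp
  also have "\<dots> = (\<Sum>S\<in>Pow {..<n}. x S * (\<Sum>T\<in>Pow {..<n}. y T * basis_act S (p + q) (basis_act T q f) i))"
    unfolding sum_distrib_left
  proof (intro sum.cong refl)
    fix S T assume S: "S \<in> Pow {..<n}" and T: "T \<in> Pow {..<n}"
    show "(if S \<inter> T = {} then ?g S T else 0) = x S * (y T * basis_act S (p + q) (basis_act T q f) i)"
    proof (cases "y T = 0")
      case False
      then have pq: "p + q = q + card T" using koszul_card[OF y] T by simp
      have "basis_act S (p + q) (basis_act T q f) =
          (if S \<inter> T = {} then vscale (ksign S T) (basis_act (S \<union> T) q f) else vzero)"
        unfolding pq using basis_act_basis_act[OF f, of T S] S T by (simp add: finite_subset)
      then show ?thesis by (simp add: vscale_def vzero_def mult_ac)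
    qed simp
  qed
  also have "\<dots> = koszul_act (p + q) x (koszul_act q y f) i"
  proof -
    have "basis_act S (p + q) (koszul_act q y f) =
        (\<lambda>i. \<Sum>T\<in>Pow {..<n}. y T * basis_act S (p + q) (basis_act T q f) i)" for S
      unfolding koszul_act_def
      by (rule lin_on_sum[OF basis_act_lin]) (auto intro: basis_act_mem_koszul[OF y f])
    then show ?thesis by (simp add: koszul_act_def)
  qed
  finally show "koszul_act q (kmult x y) f i = koszul_act (p + q) x (koszul_act q y f) i" .
qed

lemma koszul_act_kdiff: "koszul_act q (kdiff a n x) f = (\<lambda>i. \<Sum>S\<in>Pow {..<n}. x S * boundary_act S q f i)"
proof
  fix i
  let ?h = "\<lambda>S j. x S * ((-1) ^ card {s \<in> S. s < j} * a j * basis_act (S - {j}) q f i)"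
  have "koszul_act q (kdiff a n x) f i = (\<Sum>T\<in>Pow {..<n}. \<Sum>j\<in>{..<n} - T. ?h (insert j T) j)"
  proof -
    have "?h (insert j T) j = (-1) ^ card {s \<in> T. s < j} * a j * x (insert j T) * basis_act T q f i"
      if "j \<notin> T" for T j
    proof -
      have "{s \<in> insert j T. s < j} = {s \<in> T. s < j}" and "insert j T - {j} = T" using that by auto
      then show ?thesis by (simp add: mult_ac)
    qed
    then show ?thesis by (simp add: koszul_act_def kdiff_def sum_distrib_right)
  qed
  also have "\<dots> = (\<Sum>S\<in>Pow {..<n}. \<Sum>j\<in>S. ?h S j)"
    by (rule sum_Pow_insert_reindex[symmetric]) simp
  also have "\<dots> = (\<Sum>S\<in>Pow {..<n}. x S * boundary_act S q f i)"
    by (simp add: boundary_act_def sum_distrib_left)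
  finally show "koszul_act q (kdiff a n x) f i = (\<Sum>S\<in>Pow {..<n}. x S * boundary_act S q f i)" .
qed

lemma d_koszul_act:
  assumes x: "x \<in> koszul n p" and f: "f \<in> free_mod (B q)"
  shows "d (p + q) (koszul_act q x f) =
    vadd (koszul_act q (kdiff a n x) f) (vscale ((-1) ^ p) (koszul_act (q - 1) x (d q f)))"
proof
  fix i
  have "d (p + q) (koszul_act q x f) = (\<lambda>i. \<Sum>S\<in>Pow {..<n}. x S * d (p + q) (basis_act S q f) i)"
    unfolding koszul_act_def
    by (rule lin_on_sum[OF d_lin]) (auto intro: basis_act_mem_koszul[OF x f])
  moreover have "x S * d (p + q) (basis_act S q f) i =
      x S * boundary_act S q f i + (-1) ^ p * (x S * basis_act S (q - 1) (d q f) i)"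
    if S: "S \<in> Pow {..<n}" for S
  proof (cases "x S = 0")
    case False
    then have "card S = p" using koszul_card[OF x] S by simp
    then show ?thesis
      using d_basis_act[OF f, of S] S by (simp add: vadd_def vscale_def finite_subset add.commute algebra_simps)
  qed simp
  ultimately have "d (p + q) (koszul_act q x f) i =
      (\<Sum>S\<in>Pow {..<n}. x S * boundary_act S q f i) + (-1) ^ p * koszul_act (q - 1) x (d q f) i"
    by (simp add: koszul_act_def sum.distrib sum_distrib_left)
  then show "d (p + q) (koszul_act q x f) i =
      vadd (koszul_act q (kdiff a n x) f) (vscale ((-1) ^ p) (koszul_act (q - 1) x (d q f))) i"
    by (simp add: koszul_act_kdiff vadd_def vscale_def)
qed

lemma dg_koszul_module_koszul_act: "dg_koszul_module a n B d (\<lambda>_. koszul_act)"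
  unfolding dg_koszul_module_def bilin_on_def
  by (simp add: koszul_act_lin koszul_act_lin_left koszul_act_mem koszul_act_kunit koszul_act_kmult
      d_koszul_act)

end

theorem proposition5p1:
  fixes I :: "'a::comm_ring_1 set"
    and B :: "nat \<Rightarrow> 'i set" and i0 :: 'i
    and d :: "nat \<Rightarrow> ('i \<Rightarrow> 'a) \<Rightarrow> ('i \<Rightarrow> 'a)"
    and prod :: "nat \<Rightarrow> ('i \<Rightarrow> 'a) \<Rightarrow> ('i \<Rightarrow> 'a) \<Rightarrow> ('i \<Rightarrow> 'a)"
    and a :: "nat \<Rightarrow> 'a" and n :: nat
  assumes noeth: "noetherian_ring TYPE('a)"
    and ideal: "is_ideal I"
    and res: "free_resolution I B i0 d"
    and prod_bilin: "\<forall>i. bilin_on (free_mod (B 1)) (free_mod (B i)) (prod i)"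
    and prod_deg: "\<forall>i. \<forall>f1\<in>free_mod (B 1). \<forall>f\<in>free_mod (B i). prod i f1 f \<in> free_mod (B (Suc i))"
    and prod_a0: "\<forall>f1\<in>free_mod (B 1). \<forall>f\<in>free_mod (B 0).
                    d 1 (prod 0 f1 f) = vscale (d 1 f1 i0) f"
    and prod_a: "\<forall>i. \<forall>f1\<in>free_mod (B 1). \<forall>f\<in>free_mod (B (Suc i)).
                    d (Suc (Suc i)) (prod (Suc i) f1 f) =
                      vadd (vscale (d 1 f1 i0) f) (vscale (-1) (prod i f1 (d (Suc i) f)))"
    and prod_b: "\<forall>i. \<forall>f1\<in>free_mod (B 1). \<forall>f\<in>free_mod (B i).
                    prod (Suc i) f1 (prod i f1 f) = vzero"
    and regseq: "regular_sequence a n"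
    and sub: "ideal_gen a n \<subseteq> I"
  shows "\<exists>act. dg_koszul_module a n B d act"
proof -
  obtain lift where lift: "\<And>j. lift j \<in> free_mod (B 1)" "\<And>j. j < n \<Longrightarrow> d 1 (lift j) i0 = a j"
    using free_resolution_lifts[OF res sub] by blast
  have d_lin: "\<forall>i. lin_on (free_mod (B i)) (d i)"
    using res unfolding free_resolution_def by (elim conjE)
  have d_0: "\<forall>f\<in>free_mod (B 0). d 0 f = vzero"
    using res unfolding free_resolution_def by (elim conjE)
  have d_mem: "\<forall>i. \<forall>f\<in>free_mod (B (Suc i)). d (Suc i) f \<in> free_mod (B i)"
    using res unfolding free_resolution_def by (elim conjE)
  interpret koszul_lift B i0 d prod a n lift
    by (unfold_locales; use d_lin d_0 d_mem prod_bilin prod_deg prod_a0 prod_a prod_b lift in blast)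
  show ?thesis by (intro exI) (rule dg_koszul_module_koszul_act)
qed

end
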